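(* Fix $\kappa>0$ and $0<L<U<\infty$; let $a=(1+U)^{-1}$, $b=(1+L)^{-1}$, $I=[a,b]$. For $x\in\mathbb Z_+$ and $z\in I$ let $\phi_x(z)=\frac{\Gamma(x+\kappa)}{x!\,\Gamma(\kappa)}z^x(1-z)^\kappa$. For $\theta>0$ and $z\in I$ let $\Phi_\theta(z)=\frac{\theta^{\kappa-1}}{\Gamma(\kappa)}\left(\frac{1-z}{z}\right)^\kappa e^{-\theta(1-z)/z}$, and for a measurable $\psi:[0,\infty)\to\mathbb R$ with $\|\psi\|_\infty\le1$ let $T_\psi(z)=\int_0^\infty\psi(\theta)\Phi_\theta(z)\,d\theta$. Then there exist a constant $C>0$ depending only on $(\kappa,L,U)$ and constants $\rho\in(0,1)$ and $B>1$ depending only on $(L,U)$ such that, for every integer $m\ge2$ and every such $\psi$, there exist coefficients $a^{(m)}_{\psi,0},\dots,a^{(m)}_{\psi,m}\in\mathbb R$ with $$\sup_{z\in I}\Big|T_\psi(z)-\sum_{x=0}^m a^{(m)}_{\psi,x}\phi_x(z)\Big|\le C\rho^m\qquad\text{and}\qquad\sum_{x=0}^m|a^{(m)}_{\psi,x}|\le C(m+1)^{(1-\kappa)_+}B^m.$$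
   Context: $\|\psi\|_\infty$ is the supremum norm; $(t)_+=\max(t,0)$. *)

theory Defs
  imports "HOL-Analysis.Analysis"
begin

definition phiNB :: "real \<Rightarrow> nat \<Rightarrow> real \<Rightarrow> real" where
  "phiNB \<kappa> x z = Gamma (real x + \<kappa>) / (fact x * Gamma \<kappa>) * z ^ x * (1 - z) powr \<kappa>"

definition PhiG :: "real \<Rightarrow> real \<Rightarrow> real \<Rightarrow> real" where
  "PhiG \<kappa> \<theta> z = \<theta> powr (\<kappa> - 1) / Gamma \<kappa> * ((1 - z) / z) powr \<kappa>
                     * exp (- \<theta> * (1 - z) / z)"

definition Tpsi :: "real \<Rightarrow> (real \<Rightarrow> real) \<Rightarrow> real \<Rightarrow> real" where
  "Tpsi \<kappa> \<psi> z = (LINT \<theta>:{0..}|lborel. \<psi> \<theta> * PhiG \<kappa> \<theta> z)"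

end

theory Submission
  imports Defs "HOL-Complex_Analysis.Complex_Analysis"
begin

(* For 0 < z < 1 the kernel factors as
     Phi_theta(z) = theta^(kappa-1) / Gamma(kappa) * (1-z)^kappa * h_theta(z),
     h_theta(w) = w^(-kappa) * exp (-theta (1-w)/w),
   and h_theta is holomorphic in the right half-plane.  On a disc |w - 1/2| <= R < 1/2 we have
   Re (1/w) >= 1/(1/2 + R) > 1, hence |h_theta| <= (1/2 - R)^(-kappa) * exp (-delta theta) with
   delta = 1/(1/2 + R) - 1 > 0.  Cauchy's estimates bound the Taylor coefficients of h_theta at 1/2 by
   exp (-delta theta) R^(-k), and the Taylor remainder on |z - 1/2| <= r by
   exp (-delta theta) (r/R)^(m+1).  The factor exp (-delta theta) makes everything integrable
   against psi(theta) theta^(kappa-1), as the integral of theta^(kappa-1) exp (-delta theta) over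
   [0,oo) is Gamma(kappa) delta^(-kappa).  Integrating in theta gives
     T_psi(z) = (1-z)^kappa * (sum_{k<=m} A_k (z - 1/2)^k + O((r/R)^m)),   |A_k| = O(R^(-k)).
   Expanding (z - 1/2)^k in powers of z costs a factor (3/2)^k, and
   z^x (1-z)^kappa = x!/(kappa)_x * phi_x(z) with x!/(kappa)_x <= 2^x / min kappa 1, so the
   coefficients in the basis phi_x grow at most like (6/R)^m. *)

section \<open>Lebesgue integrals over [0, oo)\<close>

lemma set_integral_sum:
  fixes f :: "'i \<Rightarrow> 'a \<Rightarrow> 'b::{banach, second_countable_topology}"
  assumes "\<And>i. i \<in> I \<Longrightarrow> set_integrable M A (f i)"
  shows "set_integrable M A (\<lambda>x. \<Sum>i\<in>I. f i x)"
    and "(LINT x:A|M. (\<Sum>i\<in>I. f i x)) = (\<Sum>i\<in>I. LINT x:A|M. f i x)"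
proof -
  have int: "integrable M (\<lambda>x. indicator A x *\<^sub>R f i x)" if "i \<in> I" for i
    using assms[OF that] by (simp add: set_integrable_def)
  show "set_integrable M A (\<lambda>x. \<Sum>i\<in>I. f i x)"
    unfolding set_integrable_def scaleR_sum_right by (rule Bochner_Integration.integrable_sum) (rule int)
  show "(LINT x:A|M. (\<Sum>i\<in>I. f i x)) = (\<Sum>i\<in>I. LINT x:A|M. f i x)"
    unfolding set_lebesgue_integral_def scaleR_sum_right by (rule Bochner_Integration.integral_sum) (rule int)
qed

lemma Gamma_integral_scaled:
  fixes \<kappa> \<delta> :: real
  assumes "0 < \<kappa>" "0 < \<delta>"
  shows "has_bochner_integral lborel (\<lambda>\<theta>. indicator {0..} \<theta> * \<theta> powr (\<kappa> - 1) * exp (- \<delta> * \<theta>))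
           (Gamma \<kappa> / \<delta> powr \<kappa>)"
proof -
  define g where "g t = indicator {0..} t * t powr (\<kappa> - 1) / exp t" for t :: real
  have g: "has_bochner_integral lborel g (Gamma \<kappa>)"
    unfolding g_def using Gamma_conv_nn_integral_real[OF assms(1)] Gamma_real_pos[OF assms(1)]
    by (intro has_bochner_integral_nn_integral) auto
  have scaled: "g (0 + \<delta> * \<theta>) = \<delta> powr (\<kappa> - 1) * (indicator {0..} \<theta> * \<theta> powr (\<kappa> - 1) * exp (- \<delta> * \<theta>))"
    for \<theta>
    using assms(2) by (cases "0 \<le> \<theta>")
      (auto simp: g_def indicator_def powr_mult exp_minus field_simps zero_le_mult_iff)
  have "integrable lborel (\<lambda>\<theta>. g (0 + \<delta> * \<theta>))"
    using g assms(2) by (intro lborel_integrable_real_affine) (auto simp: has_bochner_integral_iff)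
  then have int: "integrable lborel (\<lambda>\<theta>. indicator {0..} \<theta> * \<theta> powr (\<kappa> - 1) * exp (- \<delta> * \<theta>))"
    unfolding scaled using assms(2) by simp
  have "Gamma \<kappa> = \<delta> * (\<integral>\<theta>. g (0 + \<delta> * \<theta>) \<partial>lborel)"
    using lborel_integral_real_affine[of \<delta> g 0] g assms(2) by (simp add: has_bochner_integral_iff)
  also have "\<dots> = \<delta> * \<delta> powr (\<kappa> - 1) * (\<integral>\<theta>. indicator {0..} \<theta> * \<theta> powr (\<kappa> - 1) * exp (- \<delta> * \<theta>) \<partial>lborel)"
    unfolding scaled by simp
  also have "\<delta> * \<delta> powr (\<kappa> - 1) = \<delta> powr \<kappa>"
    using assms(2) by (simp add: powr_diff)
  finally show ?thesis
    using int assms(2) by (simp add: has_bochner_integral_iff field_simps)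
qed

lemma set_integral_abs_le_Gamma:
  fixes f :: "real \<Rightarrow> real"
  assumes "0 < \<kappa>" "0 < \<delta>" "f \<in> borel_measurable lborel"
    and f_le: "\<And>\<theta>. 0 \<le> \<theta> \<Longrightarrow> \<bar>f \<theta>\<bar> \<le> K * \<theta> powr (\<kappa> - 1) * exp (- \<delta> * \<theta>)"
  shows "set_integrable lborel {0..} f"
    and "\<bar>LINT \<theta>:{0..}|lborel. f \<theta>\<bar> \<le> K * Gamma \<kappa> / \<delta> powr \<kappa>"
proof -
  define G where "G \<theta> = indicator {0..} \<theta> * \<theta> powr (\<kappa> - 1) * exp (- \<delta> * \<theta>)" for \<theta> :: real
  have G: "has_bochner_integral lborel G (Gamma \<kappa> / \<delta> powr \<kappa>)"
    unfolding G_def using assms(1,2) by (rule Gamma_integral_scaled)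
  have bound: "\<bar>indicator {0..} \<theta> * f \<theta>\<bar> \<le> K * G \<theta>" for \<theta>
    using f_le[of \<theta>] by (cases "0 \<le> \<theta>") (simp_all add: G_def mult.assoc)
  have int: "integrable lborel (\<lambda>\<theta>. indicator {0..} \<theta> * f \<theta>)"
  proof (rule Bochner_Integration.integrable_bound)
    show "integrable lborel (\<lambda>\<theta>. K * G \<theta>)"
      using G by (simp add: has_bochner_integral_iff)
    show "(\<lambda>\<theta>. indicator {0..} \<theta> * f \<theta>) \<in> borel_measurable lborel"
      using assms(3) by measurable
    show "AE \<theta> in lborel. norm (indicator {0..} \<theta> * f \<theta>) \<le> norm (K * G \<theta>)"
      using bound by (intro AE_I2) (simp add: order_trans[OF _ abs_ge_self])
  qed
  then show "set_integrable lborel {0..} f"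
    by (simp add: set_integrable_def)
  have "\<bar>LINT \<theta>:{0..}|lborel. f \<theta>\<bar> \<le> (\<integral>\<theta>. K * G \<theta> \<partial>lborel)"
    unfolding set_lebesgue_integral_def using int G bound
    by (intro integral_abs_bound_integral) (simp_all add: has_bochner_integral_iff)
  also have "\<dots> = K * Gamma \<kappa> / \<delta> powr \<kappa>"
    using G by (simp add: has_bochner_integral_iff)
  finally show "\<bar>LINT \<theta>:{0..}|lborel. f \<theta>\<bar> \<le> K * Gamma \<kappa> / \<delta> powr \<kappa>" .
qed

lemma Gamma_weighted_set_integral_abs_le:
  fixes \<psi> g :: "real \<Rightarrow> real"
  assumes "0 < \<kappa>" "0 < \<delta>"
    and [measurable]: "\<psi> \<in> borel_measurable lborel" "g \<in> borel_measurable lborel"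
    and \<psi>_le: "\<And>\<theta>. 0 \<le> \<theta> \<Longrightarrow> \<bar>\<psi> \<theta>\<bar> \<le> 1"
    and g_le: "\<And>\<theta>. 0 \<le> \<theta> \<Longrightarrow> \<bar>g \<theta>\<bar> \<le> K * exp (- \<delta> * \<theta>)"
  shows "set_integrable lborel {0..} (\<lambda>\<theta>. \<psi> \<theta> * \<theta> powr (\<kappa> - 1) / Gamma \<kappa> * g \<theta>)"
    and "\<bar>LINT \<theta>:{0..}|lborel. \<psi> \<theta> * \<theta> powr (\<kappa> - 1) / Gamma \<kappa> * g \<theta>\<bar> \<le> K / \<delta> powr \<kappa>"
proof -
  have \<Gamma>: "0 < Gamma \<kappa>"
    using \<open>0 < \<kappa>\<close> by (rule Gamma_real_pos)
  have "\<bar>\<psi> \<theta> * \<theta> powr (\<kappa> - 1) / Gamma \<kappa> * g \<theta>\<bar> \<le> K / Gamma \<kappa> * \<theta> powr (\<kappa> - 1) * exp (- \<delta> * \<theta>)"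
    if "0 \<le> \<theta>" for \<theta>
  proof -
    have "\<bar>\<psi> \<theta>\<bar> * \<bar>g \<theta>\<bar> * \<theta> powr (\<kappa> - 1) \<le> 1 * (K * exp (- \<delta> * \<theta>)) * \<theta> powr (\<kappa> - 1)"
      using \<psi>_le g_le that by (intro mult_mono mult_right_mono) auto
    then show ?thesis
      using \<Gamma> by (simp add: abs_mult field_simps)
  qed
  from set_integral_abs_le_Gamma[OF assms(1,2) _ this]
  show "set_integrable lborel {0..} (\<lambda>\<theta>. \<psi> \<theta> * \<theta> powr (\<kappa> - 1) / Gamma \<kappa> * g \<theta>)"
    and "\<bar>LINT \<theta>:{0..}|lborel. \<psi> \<theta> * \<theta> powr (\<kappa> - 1) / Gamma \<kappa> * g \<theta>\<bar> \<le> K / \<delta> powr \<kappa>"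
    using \<Gamma> by simp_all
qed

section \<open>Cauchy estimates\<close>

lemma higher_deriv_norm_le:
  assumes hol: "f holomorphic_on ball \<xi> s" and "0 < R" "R < s"
    and "\<And>w. dist \<xi> w = R \<Longrightarrow> norm (f w) \<le> M"
  shows "norm ((deriv ^^ k) f \<xi>) \<le> fact k * M / R ^ k"
proof (rule Cauchy_inequality)
  have "ball \<xi> R \<subseteq> ball \<xi> s" "cball \<xi> R \<subseteq> ball \<xi> s"
    using \<open>R < s\<close> by auto
  then show "f holomorphic_on ball \<xi> R" "continuous_on (cball \<xi> R) f"
    by (auto intro: holomorphic_on_subset[OF hol] holomorphic_on_imp_continuous_on)
qed (use assms in \<open>auto simp: dist_norm\<close>)

lemma Taylor_remainder_norm_le:
  assumes hol: "f holomorphic_on ball \<xi> s" and "0 < r" "r < R" "R < s"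
    and f_le: "\<And>w. dist \<xi> w = R \<Longrightarrow> norm (f w) \<le> M" and z: "dist \<xi> z \<le> r"
  shows "norm (f z - (\<Sum>k\<le>m. (deriv ^^ k) f \<xi> / fact k * (z - \<xi>) ^ k))
           \<le> M * (r / R) ^ Suc m / (1 - r / R)"
proof -
  define t where "t k = (deriv ^^ k) f \<xi> / fact k * (z - \<xi>) ^ k" for k
  define q where "q = r / R"
  have q: "0 < q" "q < 1"
    using assms(2,3) by (auto simp: q_def)
  have "0 \<le> M"
    using f_le[of "\<xi> + of_real R"] assms(2,3)
    by (simp add: dist_norm) (meson norm_ge_zero order_trans)
  have t_le: "norm (t k) \<le> M * q ^ k" for k
  proof -
    have "norm (t k) \<le> fact k * M / R ^ k / fact k * r ^ k"
      unfolding t_def norm_mult norm_divide norm_power norm_fact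
      using higher_deriv_norm_le[OF hol _ assms(4) f_le] z assms(2,3) \<open>0 \<le> M\<close>
      by (intro mult_mono divide_right_mono power_mono) (auto simp: dist_norm norm_minus_commute)
    then show ?thesis
      by (simp add: q_def power_divide)
  qed
  have geo: "(\<lambda>i. M * q ^ Suc m * q ^ i) sums (M * q ^ Suc m / (1 - q))"
    using sums_mult[OF geometric_sums, of q "M * q ^ Suc m"] q by (simp add: divide_inverse)
  have "t sums f z"
    unfolding t_def using hol z assms(3,4) by (intro holomorphic_power_series) auto
  then have "(\<lambda>i. t (i + Suc m)) sums (f z - (\<Sum>k<Suc m. t k))"
    by (rule sums_split_initial_segment)
  then have "norm (f z - (\<Sum>k<Suc m. t k)) = norm (\<Sum>i. t (i + Suc m))"
    by (simp add: sums_iff)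
  also have "\<dots> \<le> (\<Sum>i. M * q ^ Suc m * q ^ i)"
  proof (rule norm_suminf_le)
    show "norm (t (i + Suc m)) \<le> M * q ^ Suc m * q ^ i" for i
      using t_le[of "i + Suc m"] by (simp add: power_add mult_ac)
  qed (use geo in \<open>simp add: sums_iff\<close>)
  also have "\<dots> = M * q ^ Suc m / (1 - q)"
    using geo by (simp add: sums_iff)
  finally show ?thesis
    by (simp add: t_def q_def lessThan_Suc_atMost)
qed

lemma borel_measurable_higher_deriv:
  fixes f :: "'a \<Rightarrow> complex \<Rightarrow> complex"
  assumes S: "open S" and hol: "\<And>x. f x holomorphic_on S"
    and meas: "\<And>w. w \<in> S \<Longrightarrow> (\<lambda>x. f x w) \<in> borel_measurable M" and "z \<in> S"
  shows "(\<lambda>x. (deriv ^^ k) (f x) z) \<in> borel_measurable M"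
  using \<open>z \<in> S\<close>
proof (induction k arbitrary: z)
  case 0
  then show ?case
    using meas by simp
next
  case (Suc k)
  obtain e where "0 < e" and e: "ball z e \<subseteq> S"
    using S Suc.prems openE by blast
  define t where "t n = e / 2 * inverse (real (Suc n))" for n
  define s where "s n = z + of_real (t n)" for n
  have t: "0 < t n" "t n < e" for n
    using \<open>0 < e\<close> by (auto simp: t_def field_simps add_pos_nonneg)
  have s_in: "s n \<in> S" and s_ne: "s n \<noteq> z" for n
    using t[of n] e by (auto simp: s_def dist_norm)
  have "s \<longlonglongrightarrow> z + of_real (e / 2 * 0)"
    unfolding s_def t_def by (intro tendsto_intros LIMSEQ_inverse_real_of_nat)
  then have s_at: "filterlim s (at z) sequentially"
    using s_ne by (intro filterlim_atI) auto
  show ?case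
  proof (rule borel_measurable_LIMSEQ_metric)
    show "(\<lambda>x. ((deriv ^^ k) (f x) (s i) - (deriv ^^ k) (f x) z) / (s i - z)) \<in> borel_measurable M"
      for i
      using Suc.IH[OF s_in] Suc.IH[OF Suc.prems] by measurable
    fix x
    have "(deriv ^^ k) (f x) holomorphic_on S"
      using hol S by (rule holomorphic_higher_deriv)
    then have "((deriv ^^ k) (f x) has_field_derivative (deriv ^^ Suc k) (f x) z) (at z)"
      using S Suc.prems by (auto intro: holomorphic_derivI)
    then have "((\<lambda>w. ((deriv ^^ k) (f x) w - (deriv ^^ k) (f x) z) / (w - z))
                 \<longlongrightarrow> (deriv ^^ Suc k) (f x) z) (at z)"
      by (simp add: has_field_derivative_iff)
    from filterlim_compose[OF this s_at]
    show "(\<lambda>i. ((deriv ^^ k) (f x) (s i) - (deriv ^^ k) (f x) z) / (s i - z))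
            \<longlonglongrightarrow> (deriv ^^ Suc k) (f x) z"
      by (simp add: o_def)
  qed
qed

section \<open>The holomorphic factor of the kernel\<close>

lemma Re_inverse_ge_cball:
  fixes c R :: real
  assumes w: "norm (w - of_real c) \<le> R" and "R < c"
  shows "1 / (c + R) \<le> Re (1 / w)"
proof -
  define x y where "x = Re w" and "y = Im w"
  have "\<bar>x - c\<bar> \<le> R"
    using abs_Re_le_cmod[of "w - of_real c"] w by (simp add: x_def)
  then have x: "c - R \<le> x" "x \<le> c + R"
    by auto
  have "(norm (w - of_real c))\<^sup>2 \<le> R\<^sup>2"
    using w by (intro power_mono) auto
  then have "(x - c)\<^sup>2 + y\<^sup>2 \<le> R\<^sup>2"
    by (simp add: x_def y_def cmod_power2)
  moreover have "0 \<le> (c - R) * (c + R - x)"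
    using x \<open>R < c\<close> by simp
  ultimately have "x\<^sup>2 + y\<^sup>2 \<le> (c + R) * x"
    by (simp add: power2_eq_square algebra_simps)
  moreover have "0 < x" "0 < c + R"
    using x \<open>R < c\<close> norm_ge_zero[of "w - of_real c"] w by linarith+
  ultimately have "1 / (c + R) \<le> x / (x\<^sup>2 + y\<^sup>2)"
    by (simp add: field_simps add_pos_nonneg)
  then show ?thesis
    by (simp add: x_def y_def Re_divide power2_eq_square)
qed

definition Phi_core :: "real \<Rightarrow> real \<Rightarrow> complex \<Rightarrow> complex" where
  "Phi_core \<kappa> \<theta> w = w powr - of_real \<kappa> * exp (- of_real \<theta> * (1 - w) / w)"

lemma holomorphic_Phi_core: "Phi_core \<kappa> \<theta> holomorphic_on {w. 0 < Re w}"
proof -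
  have "w \<notin> \<real>\<^sub>\<le>\<^sub>0" "w \<noteq> 0" if "w \<in> {w. 0 < Re w}" for w
    using that by (auto simp: complex_nonpos_Reals_iff)
  then show ?thesis
    unfolding Phi_core_def by (intro holomorphic_intros) auto
qed

lemma norm_Phi_core_le:
  assumes "0 \<le> \<kappa>" "0 \<le> \<theta>" and w: "norm (w - of_real c) \<le> R" and "R < c"
  shows "norm (Phi_core \<kappa> \<theta> w) \<le> (c - R) powr (- \<kappa>) * exp (- (1 / (c + R) - 1) * \<theta>)"
proof -
  have "c - R \<le> norm w"
    using w norm_triangle_ineq2[of "of_real c" w] by (simp add: norm_minus_commute)
  then have w0: "w \<noteq> 0" and "norm w powr (- \<kappa>) \<le> (c - R) powr (- \<kappa>)"
    using assms by (auto intro: powr_mono2')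
  moreover have "norm (exp (- of_real \<theta> * (1 - w) / w)) \<le> exp (- (1 / (c + R) - 1) * \<theta>)"
  proof -
    have "- of_real \<theta> * (1 - w) / w = of_real (- \<theta>) * (1 / w - 1)"
      using w0 by (simp add: field_simps)
    then have "norm (exp (- of_real \<theta> * (1 - w) / w)) = exp (- \<theta> * (Re (1 / w) - 1))"
      by (simp add: norm_exp_eq_Re)
    moreover have "\<theta> * (1 / (c + R)) \<le> \<theta> * Re (1 / w)"
      using Re_inverse_ge_cball[OF w \<open>R < c\<close>] \<open>0 \<le> \<theta>\<close> by (rule mult_left_mono)
    ultimately show ?thesis
      by (simp add: algebra_simps)
  qed
  ultimately show ?thesis
    unfolding Phi_core_def norm_mult
    by (intro mult_mono) (auto simp: norm_powr_real_powr')
qed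

lemma Phi_core_of_real:
  assumes "0 < z"
  shows "Phi_core \<kappa> \<theta> (of_real z) = of_real (z powr (- \<kappa>) * exp (- \<theta> * (1 - z) / z))"
  using assms by (simp add: Phi_core_def powr_of_real[symmetric] exp_of_real[symmetric])

lemma PhiG_eq_Phi_core:
  assumes "0 < z" "z < 1"
  shows "PhiG \<kappa> \<theta> z = \<theta> powr (\<kappa> - 1) / Gamma \<kappa> * (1 - z) powr \<kappa> * Re (Phi_core \<kappa> \<theta> (of_real z))"
proof -
  have "((1 - z) / z) powr \<kappa> = (1 - z) powr \<kappa> * z powr (- \<kappa>)"
    using assms by (subst powr_divide) (auto simp: powr_minus divide_inverse)
  then show ?thesis
    unfolding PhiG_def Phi_core_of_real[OF assms(1)] Re_complex_of_real by (simp add: mult_ac)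
qed

definition Phi_coeff :: "real \<Rightarrow> real \<Rightarrow> nat \<Rightarrow> real" where
  "Phi_coeff \<kappa> \<theta> k = Re ((deriv ^^ k) (Phi_core \<kappa> \<theta>) (1/2)) / fact k"

lemma borel_measurable_Phi_coeff: "(\<lambda>\<theta>. Phi_coeff \<kappa> \<theta> k) \<in> borel_measurable lborel"
proof -
  have "(\<lambda>\<theta>. Phi_core \<kappa> \<theta> w) \<in> borel_measurable lborel" for w
    unfolding Phi_core_def by measurable
  then have "(\<lambda>\<theta>. (deriv ^^ k) (Phi_core \<kappa> \<theta>) (1/2)) \<in> borel_measurable lborel"
    by (intro borel_measurable_higher_deriv[OF open_halfspace_Re_gt holomorphic_Phi_core]) auto
  then show ?thesis
    unfolding Phi_coeff_def by measurable
qed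

lemma holomorphic_Phi_core_ball: "Phi_core \<kappa> \<theta> holomorphic_on ball (1/2) (1/2)"
proof (rule holomorphic_on_subset[OF holomorphic_Phi_core], safe)
  fix w :: complex
  assume "w \<in> ball (1/2) (1/2)"
  then show "0 < Re w"
    using abs_Re_le_cmod[of "1/2 - w"] by (simp add: dist_norm)
qed

lemma abs_Phi_coeff_le:
  assumes "0 \<le> \<kappa>" "0 \<le> \<theta>" "0 < R" "R < 1/2"
  shows "\<bar>Phi_coeff \<kappa> \<theta> k\<bar> \<le> (1/2 - R) powr (- \<kappa>) * exp (- (1 / (1/2 + R) - 1) * \<theta>) / R ^ k"
proof -
  have "norm ((deriv ^^ k) (Phi_core \<kappa> \<theta>) (1/2))
          \<le> fact k * ((1/2 - R) powr (- \<kappa>) * exp (- (1 / (1/2 + R) - 1) * \<theta>)) / R ^ k"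
    using assms norm_Phi_core_le[of \<kappa> \<theta> _ "1/2" R]
    by (intro higher_deriv_norm_le[OF holomorphic_Phi_core_ball]) (auto simp: dist_norm norm_minus_commute)
  then have "\<bar>Re ((deriv ^^ k) (Phi_core \<kappa> \<theta>) (1/2))\<bar>
          \<le> fact k * ((1/2 - R) powr (- \<kappa>) * exp (- (1 / (1/2 + R) - 1) * \<theta>)) / R ^ k"
    using abs_Re_le_cmod order_trans by blast
  then show ?thesis
    by (simp add: Phi_coeff_def field_simps)
qed

lemma Phi_core_Taylor_remainder_le:
  assumes "0 \<le> \<kappa>" "0 \<le> \<theta>" "0 < r" "r < R" "R < 1/2" "\<bar>z - 1/2\<bar> \<le> r"
  shows "\<bar>Re (Phi_core \<kappa> \<theta> (of_real z)) - (\<Sum>k\<le>m. Phi_coeff \<kappa> \<theta> k * (z - 1/2) ^ k)\<bar>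
           \<le> (1/2 - R) powr (- \<kappa>) * exp (- (1 / (1/2 + R) - 1) * \<theta>) * (r / R) ^ Suc m / (1 - r / R)"
proof -
  have "(of_real z - 1/2 :: complex) = of_real (z - 1/2)"
    by simp
  then have "norm (of_real z - 1/2 :: complex) = \<bar>z - 1/2\<bar>"
    by (metis norm_of_real)
  let ?T = "\<Sum>k\<le>m. (deriv ^^ k) (Phi_core \<kappa> \<theta>) (1/2) / fact k * (of_real z - 1/2) ^ k"
  have "Re ?T = (\<Sum>k\<le>m. Phi_coeff \<kappa> \<theta> k * (z - 1/2) ^ k)"
  proof (unfold Re_sum, intro sum.cong refl)
    fix k
    have "(deriv ^^ k) (Phi_core \<kappa> \<theta>) (1/2) / fact k * (of_real z - 1/2) ^ k
        = (deriv ^^ k) (Phi_core \<kappa> \<theta>) (1/2) / of_real (fact k) * of_real ((z - 1/2) ^ k)"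
      by simp
    also have "Re \<dots> = Phi_coeff \<kappa> \<theta> k * (z - 1/2) ^ k"
      by (simp only: Re_divide_of_real times_complex.sel Re_complex_of_real Im_complex_of_real
          mult_zero_right diff_zero Phi_coeff_def)
    finally show "Re ((deriv ^^ k) (Phi_core \<kappa> \<theta>) (1/2) / fact k * (of_real z - 1/2) ^ k)
        = Phi_coeff \<kappa> \<theta> k * (z - 1/2) ^ k" .
  qed
  moreover have "norm (Phi_core \<kappa> \<theta> (of_real z) - ?T)
      \<le> (1/2 - R) powr (- \<kappa>) * exp (- (1 / (1/2 + R) - 1) * \<theta>) * (r / R) ^ Suc m / (1 - r / R)"
    using assms norm_Phi_core_le[of \<kappa> \<theta> _ "1/2" R] \<open>norm (of_real z - 1/2 :: complex) = \<bar>z - 1/2\<bar>\<close>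
    by (intro Taylor_remainder_norm_le[OF holomorphic_Phi_core_ball])
       (auto simp: dist_norm norm_minus_commute)
  moreover have "\<bar>Re (Phi_core \<kappa> \<theta> (of_real z) - ?T)\<bar> \<le> norm (Phi_core \<kappa> \<theta> (of_real z) - ?T)"
    by (rule abs_Re_le_cmod)
  ultimately show ?thesis
    by (simp only: minus_complex.sel)
qed

section \<open>Taylor expansion of T_psi around 1/2\<close>

definition Tpsi_coeff :: "real \<Rightarrow> (real \<Rightarrow> real) \<Rightarrow> nat \<Rightarrow> real" where
  "Tpsi_coeff \<kappa> \<psi> k = (LINT \<theta>:{0..}|lborel. \<psi> \<theta> * \<theta> powr (\<kappa> - 1) / Gamma \<kappa> * Phi_coeff \<kappa> \<theta> k)"

lemma
  assumes "0 < \<kappa>" "0 < R" "R < 1/2"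
    and "\<psi> \<in> borel_measurable lborel" "\<And>\<theta>. 0 \<le> \<theta> \<Longrightarrow> \<bar>\<psi> \<theta>\<bar> \<le> 1"
  shows set_integrable_Tpsi_coeff:
      "set_integrable lborel {0..} (\<lambda>\<theta>. \<psi> \<theta> * \<theta> powr (\<kappa> - 1) / Gamma \<kappa> * Phi_coeff \<kappa> \<theta> k)"
    and abs_Tpsi_coeff_le:
      "\<bar>Tpsi_coeff \<kappa> \<psi> k\<bar> \<le> (1/2 - R) powr (- \<kappa>) / (1 / (1/2 + R) - 1) powr \<kappa> / R ^ k"
proof -
  have "\<bar>Phi_coeff \<kappa> \<theta> k\<bar> \<le> (1/2 - R) powr (- \<kappa>) / R ^ k * exp (- (1 / (1/2 + R) - 1) * \<theta>)"
    if "0 \<le> \<theta>" for \<theta>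
    using abs_Phi_coeff_le[of \<kappa> \<theta> R k] assms that by simp
  note bound = Gamma_weighted_set_integral_abs_le[OF assms(1) _ assms(4) borel_measurable_Phi_coeff assms(5) this]
  have "0 < 1 / (1/2 + R) - 1"
    using assms(2,3) by (simp add: field_simps)
  from bound[OF this]
  show "set_integrable lborel {0..} (\<lambda>\<theta>. \<psi> \<theta> * \<theta> powr (\<kappa> - 1) / Gamma \<kappa> * Phi_coeff \<kappa> \<theta> k)"
    and "\<bar>Tpsi_coeff \<kappa> \<psi> k\<bar> \<le> (1/2 - R) powr (- \<kappa>) / (1 / (1/2 + R) - 1) powr \<kappa> / R ^ k"
    by (simp_all add: Tpsi_coeff_def field_simps)
qed

lemma Tpsi_Taylor_polynomial_eq:
  fixes m :: nat and z :: real
  assumes "0 < \<kappa>" "\<psi> \<in> borel_measurable lborel" "\<And>\<theta>. 0 \<le> \<theta> \<Longrightarrow> \<bar>\<psi> \<theta>\<bar> \<le> 1"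
  shows "set_integrable lborel {0..}
           (\<lambda>\<theta>. \<Sum>k\<le>m. \<psi> \<theta> * \<theta> powr (\<kappa> - 1) / Gamma \<kappa> * Phi_coeff \<kappa> \<theta> k * (z - 1/2) ^ k)"
    and "(LINT \<theta>:{0..}|lborel. \<Sum>k\<le>m. \<psi> \<theta> * \<theta> powr (\<kappa> - 1) / Gamma \<kappa> * Phi_coeff \<kappa> \<theta> k * (z - 1/2) ^ k)
           = (\<Sum>k\<le>m. Tpsi_coeff \<kappa> \<psi> k * (z - 1/2) ^ k)"
proof -
  have "set_integrable lborel {0..}
          (\<lambda>\<theta>. \<psi> \<theta> * \<theta> powr (\<kappa> - 1) / Gamma \<kappa> * Phi_coeff \<kappa> \<theta> k * (z - 1/2) ^ k)" for k
    using set_integrable_Tpsi_coeff[of \<kappa> "1/4" \<psi> k] assms by (intro set_integrable_mult_left) auto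
  note sum = set_integral_sum[where I = "{..m}"
      and f = "\<lambda>k \<theta>. \<psi> \<theta> * \<theta> powr (\<kappa> - 1) / Gamma \<kappa> * Phi_coeff \<kappa> \<theta> k * (z - 1/2) ^ k", OF this]
  then show "set_integrable lborel {0..}
      (\<lambda>\<theta>. \<Sum>k\<le>m. \<psi> \<theta> * \<theta> powr (\<kappa> - 1) / Gamma \<kappa> * Phi_coeff \<kappa> \<theta> k * (z - 1/2) ^ k)"
    by blast
  show "(LINT \<theta>:{0..}|lborel. \<Sum>k\<le>m. \<psi> \<theta> * \<theta> powr (\<kappa> - 1) / Gamma \<kappa> * Phi_coeff \<kappa> \<theta> k * (z - 1/2) ^ k)
      = (\<Sum>k\<le>m. Tpsi_coeff \<kappa> \<psi> k * (z - 1/2) ^ k)"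
    using sum(2) by (simp add: Tpsi_coeff_def)
qed

lemma Tpsi_Taylor_remainder_le:
  assumes "0 < \<kappa>" "0 < r" "r < R" "R < 1/2"
    and \<psi>_meas: "\<psi> \<in> borel_measurable lborel" and \<psi>_le: "\<And>\<theta>. 0 \<le> \<theta> \<Longrightarrow> \<bar>\<psi> \<theta>\<bar> \<le> 1"
    and z: "0 < z" "z < 1" "\<bar>z - 1/2\<bar> \<le> r"
  shows "\<bar>Tpsi \<kappa> \<psi> z - (1 - z) powr \<kappa> * (\<Sum>k\<le>m. Tpsi_coeff \<kappa> \<psi> k * (z - 1/2) ^ k)\<bar>
           \<le> (1/2 - R) powr (- \<kappa>) / (1 / (1/2 + R) - 1) powr \<kappa> * (r / R) ^ Suc m / (1 - r / R)"
proof -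
  define w where "w \<theta> = \<psi> \<theta> * \<theta> powr (\<kappa> - 1) / Gamma \<kappa>" for \<theta>
  define p where "p = (\<lambda>\<theta>. \<Sum>k\<le>m. w \<theta> * Phi_coeff \<kappa> \<theta> k * (z - 1/2) ^ k)"
  define g where "g \<theta> = Re (Phi_core \<kappa> \<theta> (of_real z)) - (\<Sum>k\<le>m. Phi_coeff \<kappa> \<theta> k * (z - 1/2) ^ k)"
    for \<theta>
  define \<delta> where "\<delta> = 1 / (1/2 + R) - 1"
  have "0 < \<delta>"
    using assms(2-4) by (simp add: \<delta>_def field_simps)
  note [measurable] = \<psi>_meas borel_measurable_Phi_coeff
  have g_meas: "g \<in> borel_measurable lborel"
    unfolding g_def Phi_core_def by measurable
  have g_le: "\<bar>g \<theta>\<bar> \<le> (1/2 - R) powr (- \<kappa>) * (r / R) ^ Suc m / (1 - r / R) * exp (- \<delta> * \<theta>)"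
    if "0 \<le> \<theta>" for \<theta>
    using Phi_core_Taylor_remainder_le[of \<kappa> \<theta> r R z m] assms that
    by (simp add: g_def \<delta>_def ac_simps)
  note remainder = Gamma_weighted_set_integral_abs_le[OF assms(1) \<open>0 < \<delta>\<close> \<psi>_meas g_meas \<psi>_le g_le]
  note p = Tpsi_Taylor_polynomial_eq[OF assms(1) \<psi>_meas \<psi>_le, where m = m and z = z,
      folded w_def, folded p_def]
  have "\<psi> \<theta> * PhiG \<kappa> \<theta> z = (1 - z) powr \<kappa> * (w \<theta> * g \<theta> + p \<theta>)" for \<theta>
    unfolding PhiG_eq_Phi_core[OF z(1,2)] g_def p_def w_def
    by (simp add: right_diff_distrib sum_distrib_left mult_ac)
  then have "Tpsi \<kappa> \<psi> z = (1 - z) powr \<kappa> * ((LINT \<theta>:{0..}|lborel. w \<theta> * g \<theta>) + (LINT \<theta>:{0..}|lborel. p \<theta>))"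
    using remainder(1) p(1) by (simp add: Tpsi_def w_def)
  then have "\<bar>Tpsi \<kappa> \<psi> z - (1 - z) powr \<kappa> * (\<Sum>k\<le>m. Tpsi_coeff \<kappa> \<psi> k * (z - 1/2) ^ k)\<bar>
      = (1 - z) powr \<kappa> * \<bar>LINT \<theta>:{0..}|lborel. w \<theta> * g \<theta>\<bar>"
    by (simp add: p(2) algebra_simps abs_mult)
  also have "\<dots> \<le> 1 * ((1/2 - R) powr (- \<kappa>) * (r / R) ^ Suc m / (1 - r / R) / \<delta> powr \<kappa>)"
    using remainder(2) z assms(1) unfolding w_def
    by (intro mult_mono powr_le1) auto
  also have "\<dots> = (1/2 - R) powr (- \<kappa>) / (1 / (1/2 + R) - 1) powr \<kappa> * (r / R) ^ Suc m / (1 - r / R)"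
    by (simp add: \<delta>_def)
  finally show ?thesis .
qed

section \<open>Change of basis to the kernels phi_x\<close>

lemma binomial_ring_atMost:
  fixes a b :: "'a::comm_semiring_1"
  assumes "k \<le> m"
  shows "(a + b) ^ k = (\<Sum>x\<le>m. of_nat (k choose x) * a ^ x * b ^ (k - x))"
  unfolding binomial_ring using assms by (intro sum.mono_neutral_left) (auto simp: binomial_eq_0)

lemma sum_shifted_powers_eq:
  fixes A :: "nat \<Rightarrow> 'a::comm_ring_1"
  shows "(\<Sum>k\<le>m. A k * (z - w) ^ k) = (\<Sum>x\<le>m. (\<Sum>k\<le>m. A k * of_nat (k choose x) * (- w) ^ (k - x)) * z ^ x)"
proof -
  have "(\<Sum>k\<le>m. A k * (z - w) ^ k) = (\<Sum>k\<le>m. \<Sum>x\<le>m. A k * of_nat (k choose x) * (- w) ^ (k - x) * z ^ x)"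
  proof (rule sum.cong[OF refl])
    fix k
    assume "k \<in> {..m}"
    then have "(z - w) ^ k = (\<Sum>x\<le>m. of_nat (k choose x) * z ^ x * (- w) ^ (k - x))"
      using binomial_ring_atMost[of k m z "- w"] by simp
    then show "A k * (z - w) ^ k = (\<Sum>x\<le>m. A k * of_nat (k choose x) * (- w) ^ (k - x) * z ^ x)"
      by (simp add: sum_distrib_left mult_ac)
  qed
  also have "\<dots> = (\<Sum>x\<le>m. (\<Sum>k\<le>m. A k * of_nat (k choose x) * (- w) ^ (k - x)) * z ^ x)"
    by (subst sum.swap) (simp add: sum_distrib_right)
  finally show ?thesis .
qed

lemma sum_abs_shifted_coeffs_le:
  fixes A :: "nat \<Rightarrow> 'a::linordered_idom"
  shows "(\<Sum>x\<le>m. \<bar>\<Sum>k\<le>m. A k * of_nat (k choose x) * (- w) ^ (k - x)\<bar>) \<le> (\<Sum>k\<le>m. \<bar>A k\<bar> * (1 + \<bar>w\<bar>) ^ k)"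
proof -
  have "(\<Sum>x\<le>m. \<bar>\<Sum>k\<le>m. A k * of_nat (k choose x) * (- w) ^ (k - x)\<bar>)
      \<le> (\<Sum>x\<le>m. \<Sum>k\<le>m. \<bar>A k\<bar> * (of_nat (k choose x) * 1 ^ x * \<bar>w\<bar> ^ (k - x)))"
    by (intro sum_mono order_trans[OF sum_abs]) (simp add: abs_mult power_abs)
  also have "\<dots> = (\<Sum>k\<le>m. \<bar>A k\<bar> * (1 + \<bar>w\<bar>) ^ k)"
    by (subst sum.swap) (simp add: binomial_ring_atMost[of _ m 1 "\<bar>w\<bar>"] sum_distrib_left)
  finally show ?thesis .
qed

lemma phiNB_eq_pochhammer:
  assumes "0 < \<kappa>"
  shows "phiNB \<kappa> x z = pochhammer \<kappa> x / fact x * z ^ x * (1 - z) powr \<kappa>"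
proof -
  have "\<kappa> \<notin> \<int>\<^sub>\<le>\<^sub>0"
    using assms by (auto elim: nonpos_Ints_cases)
  then show ?thesis
    by (simp add: phiNB_def pochhammer_Gamma add.commute)
qed

lemma fact_div_pochhammer_le:
  fixes \<kappa> :: real
  assumes "0 < \<kappa>"
  shows "fact n / pochhammer \<kappa> n \<le> 2 ^ n / min \<kappa> 1"
proof (cases n)
  case 0
  then show ?thesis
    using assms by (simp add: field_simps)
next
  case (Suc k)
  \<comment> \<open>only the factor for \<open>j = 0\<close> can exceed 2\<close>
  have "fact n / pochhammer \<kappa> n = (\<Prod>j<Suc k. (1 + of_nat j) / (\<kappa> + of_nat j))"
    by (simp add: Suc pochhammer_fact pochhammer_prod prod_dividef atLeast0LessThan)
  also have "\<dots> = 1 / \<kappa> * (\<Prod>j<k. (2 + of_nat j) / (\<kappa> + 1 + of_nat j))"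
    by (subst prod.lessThan_Suc_shift) (simp add: add_ac)
  also have "\<dots> \<le> 1 / \<kappa> * (\<Prod>j<k. 2)"
    using assms by (intro mult_left_mono prod_mono) (auto simp: field_simps)
  also have "\<dots> \<le> 2 / min \<kappa> 1 * 2 ^ k"
    using assms by (simp add: field_simps min_def)
  finally show ?thesis
    by (simp add: Suc)
qed

lemma phiNB_expansion:
  assumes "0 < \<kappa>"
  obtains c where "\<And>z. (1 - z) powr \<kappa> * (\<Sum>k\<le>m. A k * (z - w) ^ k) = (\<Sum>x\<le>m. c x * phiNB \<kappa> x z)"
    and "(\<Sum>x\<le>m. \<bar>c x\<bar>) \<le> 2 ^ m / min \<kappa> 1 * (\<Sum>k\<le>m. \<bar>A k\<bar> * (1 + \<bar>w\<bar>) ^ k)"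
proof
  define d where "d x = (\<Sum>k\<le>m. A k * of_nat (k choose x) * (- w) ^ (k - x))" for x
  define c where "c x = d x * fact x / pochhammer \<kappa> x" for x
  have poch: "0 < pochhammer \<kappa> x" for x
    using assms by (rule pochhammer_pos)
  show "(1 - z) powr \<kappa> * (\<Sum>k\<le>m. A k * (z - w) ^ k) = (\<Sum>x\<le>m. c x * phiNB \<kappa> x z)" for z
    unfolding sum_shifted_powers_eq[of A z w m] sum_distrib_left d_def[symmetric]
  proof (intro sum.cong refl)
    fix x
    show "(1 - z) powr \<kappa> * (d x * z ^ x) = c x * phiNB \<kappa> x z"
      using poch[of x] by (simp add: c_def phiNB_eq_pochhammer[OF assms] field_simps)
  qed
  have "(\<Sum>x\<le>m. \<bar>c x\<bar>) \<le> (\<Sum>x\<le>m. 2 ^ m / min \<kappa> 1 * \<bar>d x\<bar>)"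
  proof (rule sum_mono)
    fix x
    assume "x \<in> {..m}"
    then have "fact x / pochhammer \<kappa> x \<le> 2 ^ m / min \<kappa> 1"
      using assms by (intro order_trans[OF fact_div_pochhammer_le divide_right_mono]) auto
    then have "fact x / pochhammer \<kappa> x * \<bar>d x\<bar> \<le> 2 ^ m / min \<kappa> 1 * \<bar>d x\<bar>"
      by (rule mult_right_mono) simp
    moreover have "\<bar>c x\<bar> = fact x / pochhammer \<kappa> x * \<bar>d x\<bar>"
      using poch[of x] by (simp add: c_def abs_mult)
    ultimately show "\<bar>c x\<bar> \<le> 2 ^ m / min \<kappa> 1 * \<bar>d x\<bar>"
      by simp
  qed
  also have "\<dots> \<le> 2 ^ m / min \<kappa> 1 * (\<Sum>k\<le>m. \<bar>A k\<bar> * (1 + \<bar>w\<bar>) ^ k)"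
    unfolding sum_distrib_left[symmetric] d_def using assms
    by (intro mult_left_mono sum_abs_shifted_coeffs_le) auto
  finally show "(\<Sum>x\<le>m. \<bar>c x\<bar>) \<le> 2 ^ m / min \<kappa> 1 * (\<Sum>k\<le>m. \<bar>A k\<bar> * (1 + \<bar>w\<bar>) ^ k)" .
qed

lemma sum_atMost_power_le:
  fixes q :: real
  assumes "1 \<le> q"
  shows "(\<Sum>k\<le>m. q ^ k) \<le> (2 * q) ^ m"
proof -
  have "(\<Sum>k\<le>m. q ^ k) \<le> (\<Sum>k\<le>m. q ^ m)"
    using assms by (intro sum_mono power_increasing) auto
  also have "\<dots> = (real m + 1) * q ^ m"
    by simp
  also have "\<dots> \<le> 2 ^ m * q ^ m"
    using assms by (intro mult_right_mono) (simp_all add: add.commute less_exp[THEN Suc_leI] flip: of_nat_Suc)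
  finally show ?thesis
    by (simp add: power_mult_distrib)
qed

lemma sum_abs_Tpsi_coeff_le:
  assumes "0 < \<kappa>" "0 < R" "R < 1/2"
    and "\<psi> \<in> borel_measurable lborel" "\<And>\<theta>. 0 \<le> \<theta> \<Longrightarrow> \<bar>\<psi> \<theta>\<bar> \<le> 1"
  defines "K \<equiv> (1/2 - R) powr (- \<kappa>) / (1 / (1/2 + R) - 1) powr \<kappa>"
  shows "(\<Sum>k\<le>m. \<bar>Tpsi_coeff \<kappa> \<psi> k\<bar> * (3/2) ^ k) \<le> K * (3 / R) ^ m"
proof -
  have "(\<Sum>k\<le>m. \<bar>Tpsi_coeff \<kappa> \<psi> k\<bar> * (3/2) ^ k) \<le> (\<Sum>k\<le>m. K / R ^ k * (3/2) ^ k)"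
    using abs_Tpsi_coeff_le[OF assms(1-5)] unfolding K_def by (intro sum_mono mult_right_mono) auto
  also have "\<dots> = K * (\<Sum>k\<le>m. (3 / (2 * R)) ^ k)"
    by (simp add: sum_distrib_left power_divide power_mult_distrib ac_simps)
  also have "\<dots> \<le> K * (2 * (3 / (2 * R))) ^ m"
    using assms(2,3) by (intro mult_left_mono sum_atMost_power_le) (auto simp: K_def field_simps)
  finally show ?thesis
    using assms(2) by simp
qed

lemma Tpsi_approximation:
  assumes "0 < \<kappa>" "0 < r" "r < R" "R < 1/2"
    and \<psi>_meas: "\<psi> \<in> borel_measurable lborel" and \<psi>_le: "\<And>\<theta>. 0 \<le> \<theta> \<Longrightarrow> \<bar>\<psi> \<theta>\<bar> \<le> 1"
  defines "K \<equiv> (1/2 - R) powr (- \<kappa>) / (1 / (1/2 + R) - 1) powr \<kappa>"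
  obtains c where
    "\<And>z. 0 < z \<Longrightarrow> z < 1 \<Longrightarrow> \<bar>z - 1/2\<bar> \<le> r \<Longrightarrow>
       \<bar>Tpsi \<kappa> \<psi> z - (\<Sum>x\<le>m. c x * phiNB \<kappa> x z)\<bar> \<le> K / (1 - r / R) * (r / R) ^ m"
    and "(\<Sum>x\<le>m. \<bar>c x\<bar>) \<le> K / min \<kappa> 1 * (6 / R) ^ m"
proof -
  obtain c where expand:
      "\<And>z. (1 - z) powr \<kappa> * (\<Sum>k\<le>m. Tpsi_coeff \<kappa> \<psi> k * (z - 1/2) ^ k) = (\<Sum>x\<le>m. c x * phiNB \<kappa> x z)"
    and c_le: "(\<Sum>x\<le>m. \<bar>c x\<bar>) \<le> 2 ^ m / min \<kappa> 1 * (\<Sum>k\<le>m. \<bar>Tpsi_coeff \<kappa> \<psi> k\<bar> * (1 + \<bar>1/2\<bar>) ^ k)"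
    using phiNB_expansion[OF assms(1)] by blast
  have "0 < R" "0 < r / R" "r / R < 1"
    using assms(2,3) by auto
  have "\<bar>Tpsi \<kappa> \<psi> z - (\<Sum>x\<le>m. c x * phiNB \<kappa> x z)\<bar> \<le> K / (1 - r / R) * (r / R) ^ m"
    if "0 < z" "z < 1" "\<bar>z - 1/2\<bar> \<le> r" for z
  proof -
    have "\<bar>Tpsi \<kappa> \<psi> z - (\<Sum>x\<le>m. c x * phiNB \<kappa> x z)\<bar> \<le> K * (r / R) ^ Suc m / (1 - r / R)"
      unfolding expand[symmetric] K_def using Tpsi_Taylor_remainder_le[OF assms(1-4) \<psi>_meas \<psi>_le that] .
    also have "\<dots> \<le> K * (r / R) ^ m / (1 - r / R)"
      using \<open>0 < r / R\<close> \<open>r / R < 1\<close> unfolding K_def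
      by (intro divide_right_mono mult_left_mono power_decreasing) auto
    finally show ?thesis
      by simp
  qed
  moreover have "(\<Sum>x\<le>m. \<bar>c x\<bar>) \<le> K / min \<kappa> 1 * (6 / R) ^ m"
  proof -
    have "2 ^ m / min \<kappa> 1 * (\<Sum>k\<le>m. \<bar>Tpsi_coeff \<kappa> \<psi> k\<bar> * (1 + \<bar>1/2\<bar>) ^ k) \<le> 2 ^ m / min \<kappa> 1 * (K * (3 / R) ^ m)"
      using sum_abs_Tpsi_coeff_le[OF assms(1) \<open>0 < R\<close> assms(4) \<psi>_meas \<psi>_le, of m] assms(1)
      unfolding K_def by (intro mult_left_mono) auto
    with c_le show ?thesis
      by (simp add: power_divide field_simps flip: power_mult_distrib)
  qed
  ultimately show ?thesis
    using that by blast
qed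

lemma Tpsi_uniform_approximation:
  assumes "0 < \<kappa>" "0 < r" "r < R" "R < 1/2"
  shows "\<exists>C>0. \<forall>m \<psi>. \<psi> \<in> borel_measurable lborel \<longrightarrow> (\<forall>\<theta>\<ge>0. \<bar>\<psi> \<theta>\<bar> \<le> 1) \<longrightarrow>
    (\<exists>c. (\<forall>z. 0 < z \<longrightarrow> z < 1 \<longrightarrow> \<bar>z - 1/2\<bar> \<le> r \<longrightarrow>
              \<bar>Tpsi \<kappa> \<psi> z - (\<Sum>x\<le>m. c x * phiNB \<kappa> x z)\<bar> \<le> C * (r / R) ^ m) \<and>
         (\<Sum>x\<le>m. \<bar>c x\<bar>) \<le> C * (6 / R) ^ m)"
proof -
  define K where "K = (1/2 - R) powr (- \<kappa>) / (1 / (1/2 + R) - 1) powr \<kappa>"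
  define C where "C = K / (1 - r / R) + K / min \<kappa> 1"
  have "0 < K"
    using assms by (simp add: K_def field_simps)
  then have "0 < K / (1 - r / R)" "0 < K / min \<kappa> 1"
    using assms by simp_all
  then have C: "0 < C" "K / (1 - r / R) \<le> C" "K / min \<kappa> 1 \<le> C"
    by (simp_all add: C_def)
  have weaken: "K / (1 - r / R) * (r / R) ^ m \<le> C * (r / R) ^ m" "K / min \<kappa> 1 * (6 / R) ^ m \<le> C * (6 / R) ^ m"
    for m
    using C assms by (intro mult_right_mono; simp)+
  show ?thesis
    apply (intro exI[of _ C] conjI allI impI \<open>0 < C\<close>)
    subgoal premises \<psi> for m \<psi>
    proof -
      obtain c where
        approx: "\<And>z. 0 < z \<Longrightarrow> z < 1 \<Longrightarrow> \<bar>z - 1/2\<bar> \<le> r \<Longrightarrow>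
          \<bar>Tpsi \<kappa> \<psi> z - (\<Sum>x\<le>m. c x * phiNB \<kappa> x z)\<bar> \<le> K / (1 - r / R) * (r / R) ^ m"
        and coeffs: "(\<Sum>x\<le>m. \<bar>c x\<bar>) \<le> K / min \<kappa> 1 * (6 / R) ^ m"
        using Tpsi_approximation[OF assms \<psi>(1), of m] \<psi>(2) unfolding K_def by blast
      show ?thesis
        using order_trans[OF approx weaken(1)] order_trans[OF coeffs weaken(2)] by blast
    qed
    done
qed

theorem lemmaD3:
  fixes L U :: real
  assumes "0 < L" "L < U"
  shows "\<exists>\<rho> B. 0 < \<rho> \<and> \<rho> < 1 \<and> 1 < B \<and>
    (\<forall>\<kappa>::real. \<kappa> > 0 \<longrightarrow>
      (\<exists>C>0. \<forall>(m::nat) (\<psi>::real \<Rightarrow> real).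
         m \<ge> 2 \<longrightarrow> \<psi> \<in> borel_measurable lborel \<longrightarrow> (\<forall>\<theta>\<ge>0. \<bar>\<psi> \<theta>\<bar> \<le> 1) \<longrightarrow>
         (\<exists>c :: nat \<Rightarrow> real.
            (\<forall>z\<in>{1/(1+U)..1/(1+L)}.
               \<bar>Tpsi \<kappa> \<psi> z - (\<Sum>x\<le>m. c x * phiNB \<kappa> x z)\<bar> \<le> C * \<rho> ^ m) \<and>
            (\<Sum>x\<le>m. \<bar>c x\<bar>) \<le> C * (real m + 1) powr (max (1 - \<kappa>) 0) * B ^ m)))"
proof -
  define a b where "a = 1/(1+U)" and "b = 1/(1+L)"
  \<comment> \<open>the term \<open>1/4\<close> only keeps \<open>r\<close> positive\<close>
  define r where "r = max (max (1/2 - a) (b - 1/2)) (1/4)"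
  define R where "R = (r + 1/2) / 2"
  have "0 < a" "b < 1"
    using assms by (simp_all add: a_def b_def)
  then have z: "0 < z \<and> z < 1 \<and> \<bar>z - 1/2\<bar> \<le> r" if "z \<in> {a..b}" for z
    using that by (auto simp: r_def abs_le_iff)
  have r: "0 < r" "r < R" "R < 1/2"
    using \<open>0 < a\<close> \<open>b < 1\<close> by (simp_all add: r_def R_def max_def)
  have "\<exists>C>0. \<forall>(m::nat) \<psi>. 2 \<le> m \<longrightarrow> \<psi> \<in> borel_measurable lborel \<longrightarrow> (\<forall>\<theta>\<ge>0. \<bar>\<psi> \<theta>\<bar> \<le> 1) \<longrightarrow>
      (\<exists>c. (\<forall>z\<in>{a..b}. \<bar>Tpsi \<kappa> \<psi> z - (\<Sum>x\<le>m. c x * phiNB \<kappa> x z)\<bar> \<le> C * (r / R) ^ m) \<and>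
           (\<Sum>x\<le>m. \<bar>c x\<bar>) \<le> C * (real m + 1) powr (max (1 - \<kappa>) 0) * (6 / R) ^ m)"
    if "0 < \<kappa>" for \<kappa>
  proof -
    obtain C where "0 < C" and approx: "\<forall>m \<psi>. \<psi> \<in> borel_measurable lborel \<longrightarrow> (\<forall>\<theta>\<ge>0. \<bar>\<psi> \<theta>\<bar> \<le> 1) \<longrightarrow>
        (\<exists>c. (\<forall>z. 0 < z \<longrightarrow> z < 1 \<longrightarrow> \<bar>z - 1/2\<bar> \<le> r \<longrightarrow>
                  \<bar>Tpsi \<kappa> \<psi> z - (\<Sum>x\<le>m. c x * phiNB \<kappa> x z)\<bar> \<le> C * (r / R) ^ m) \<and>
             (\<Sum>x\<le>m. \<bar>c x\<bar>) \<le> C * (6 / R) ^ m)"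
      using Tpsi_uniform_approximation[OF \<open>0 < \<kappa>\<close> r] by blast
    have weaken: "C * (6 / R) ^ m \<le> C * (real m + 1) powr max (1 - \<kappa>) 0 * (6 / R) ^ m" for m
      using \<open>0 < C\<close> r by (intro mult_right_mono mult_le_cancel_left1[THEN iffD2]) (auto intro: ge_one_powr_ge_zero)
    show ?thesis
      apply (intro exI[of _ C] conjI allI impI \<open>0 < C\<close>)
      subgoal for m \<psi>
        using approx[rule_format, of \<psi> m] z weaken[of m] by (meson order_trans)
      done
  qed
  moreover have "0 < r / R" "r / R < 1" "1 < 6 / R"
    using r by (simp_all add: field_simps)
  ultimately show ?thesis
    unfolding a_def b_def by blast
qed

end
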